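(* Let $R$ be an associative $\mathbb C$-algebra, let $r_1,r_2,\dots\in R$ and $r'_1,r'_2,\dots\in R$ be two sequences, and let $M_j,N_j$ (entries $\alpha_{j;a,b},\beta_{j;a,b}$) and $M'_j,N'_j$ (entries $\alpha'_{j;a,b},\beta'_{j;a,b}$) be the matrices determined by the recursion below from $(r_j)$ and $(r'_j)$ respectively. (1) If $\lambda\in\mathbb C$ and $r'_j=\lambda^jr_j$ for all $j$, then $\alpha'_{j;a,b}=\lambda^{a-b+1}\alpha_{j;a,b}$ and $\beta'_{j;a,b}=\lambda^{a-b+1}\beta_{j;a,b}$ for all $j\ge a\ge b\ge1$. (2) If $r\mapsto r^*$ is an anti-automorphism of the $\mathbb C$-algebra $R$ and $r'_j=r_j^*$ for all $j$, then $\alpha'_{j;a,b}=(\beta_{j;j-b+1,j-a+1})^*$ and $\beta'_{j;a,b}=(\alpha_{j;j-b+1,j-a+1})^*$ for all $j\ge a\ge b\ge1$.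
   Context: Notation: $E^{[m]}$ is the $m\times m$ matrix over $R$ with $1_R$ on the superdiagonal and $0$ elsewhere; $F^{[m]}$ has entry $i(m-i)\cdot1_R$ in position $(i+1,i)$ for $1\le i\le m-1$ and $0$ elsewhere. Recursion: given $r_1,r_2,\dots\in R$, there are unique matrices $M_j$ ($j\times(j+1)$) and $N_j$ ($(j+1)\times j$) over $R$, $j\ge0$, such that: (A) $M_j$ has $(a,a+1)$ entry $1_R$, $(a,b)$ entry $\alpha_{j;a,b}$ for $b\le a$, and $0$ for $b>a+1$; $N_j$ has $(a,a)$ entry $1_R$ for $a\le j$, $(a+1,b)$ entry $\beta_{j;a,b}$ for $1\le b\le a\le j$, and $0$ for $b>a$ (so $M_0$, $N_0$ are the empty $0\times1$, $1\times0$ matrices); (B) for all $j\ge1$, $M_jN_j=N_{j-1}M_{j-1}+X_j$, where $X_j$ is the $j\times j$ matrix whose only nonzero entry is $r_j$ in the lower-left corner; (C) for all $j\ge1$, $N_jM_j-E^{[j+1]}$ commutes with $F^{[j+1]}$. *)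

theory Defs
  imports Complex_Main
begin

text \<open>Matrices over R are modelled as functions nat => nat => R with 1-based
indices; only entries inside the stated dimensions are meaningful.\<close>

definition complex_algebra :: "(complex \<Rightarrow> 'a::ring_1 \<Rightarrow> 'a) \<Rightarrow> bool" where
  "complex_algebra smul \<longleftrightarrow>
     (\<forall>c x y. smul c (x + y) = smul c x + smul c y) \<and>
     (\<forall>c d x. smul (c + d) x = smul c x + smul d x) \<and>
     (\<forall>c d x. smul (c * d) x = smul c (smul d x)) \<and>
     (\<forall>x. smul 1 x = x) \<and>
     (\<forall>c x y. smul c (x * y) = smul c x * y) \<and>
     (\<forall>c x y. smul c (x * y) = x * smul c y)"

definition anti_automorphism :: "(complex \<Rightarrow> 'a::ring_1 \<Rightarrow> 'a) \<Rightarrow> ('a \<Rightarrow> 'a) \<Rightarrow> bool" where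
  "anti_automorphism smul st \<longleftrightarrow>
     bij st \<and>
     (\<forall>x y. st (x + y) = st x + st y) \<and>
     (\<forall>x y. st (x * y) = st y * st x) \<and>
     st 1 = 1 \<and>
     (\<forall>c x. st (smul c x) = smul c (st x))"

definition Emat :: "nat \<Rightarrow> nat \<Rightarrow> nat \<Rightarrow> 'a::ring_1" where
  "Emat m a b = (if b = a + 1 then 1 else 0)"

definition Fmat :: "nat \<Rightarrow> nat \<Rightarrow> nat \<Rightarrow> 'a::ring_1" where
  "Fmat m a b = (if a = b + 1 then of_nat (b * (m - b)) else 0)"

definition mmul :: "nat \<Rightarrow> (nat \<Rightarrow> nat \<Rightarrow> 'a::ring_1) \<Rightarrow> (nat \<Rightarrow> nat \<Rightarrow> 'a) \<Rightarrow> nat \<Rightarrow> nat \<Rightarrow> 'a" where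
  "mmul k A B a c = (\<Sum>b = 1..k. A a b * B b c)"

text \<open>Conditions (A), (B), (C) of the recursion for the sequence r (r 0 unused):
M j is j x (j+1), N j is (j+1) x j.\<close>
definition is_recursion_solution ::
  "(nat \<Rightarrow> 'a::ring_1) \<Rightarrow> (nat \<Rightarrow> nat \<Rightarrow> nat \<Rightarrow> 'a) \<Rightarrow> (nat \<Rightarrow> nat \<Rightarrow> nat \<Rightarrow> 'a) \<Rightarrow> bool" where
  "is_recursion_solution r M N \<longleftrightarrow>
     \<comment> \<open>(A)\<close>
     (\<forall>j a. 1 \<le> a \<and> a \<le> j \<longrightarrow> M j a (a + 1) = 1) \<and>
     (\<forall>j a b. 1 \<le> a \<and> a \<le> j \<and> a + 1 < b \<and> b \<le> j + 1 \<longrightarrow> M j a b = 0) \<and>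
     (\<forall>j a. 1 \<le> a \<and> a \<le> j \<longrightarrow> N j a a = 1) \<and>
     (\<forall>j a b. 1 \<le> a \<and> a \<le> j + 1 \<and> a < b \<and> b \<le> j \<longrightarrow> N j a b = 0) \<and>
     \<comment> \<open>(B)\<close>
     (\<forall>j a c. 1 \<le> j \<and> 1 \<le> a \<and> a \<le> j \<and> 1 \<le> c \<and> c \<le> j \<longrightarrow>
        mmul (j + 1) (M j) (N j) a c =
        mmul (j - 1) (N (j - 1)) (M (j - 1)) a c + (if a = j \<and> c = 1 then r j else 0)) \<and>
     \<comment> \<open>(C)\<close>
     (\<forall>j a c. 1 \<le> j \<and> 1 \<le> a \<and> a \<le> j + 1 \<and> 1 \<le> c \<and> c \<le> j + 1 \<longrightarrow>
        (let P = (\<lambda>x y. mmul j (N j) (M j) x y - Emat (j + 1) x y) in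
         mmul (j + 1) P (Fmat (j + 1)) a c = mmul (j + 1) (Fmat (j + 1)) P a c))"

end

theory Submission
  imports Defs
begin

text \<open>
Give the entry \<open>(a,b)\<close> of \<open>M j\<close> degree \<open>a - b + 1\<close> and the entry \<open>(a,b)\<close> of \<open>N j\<close> degree
\<open>a - b\<close>. Both transformations in the statement (multiplying entries of degree \<open>d\<close> by \<open>\<lambda>^d\<close>,
resp. applying \<open>*\<close> and reflecting in the antidiagonal) map a solution of the recursion for
\<open>r\<close> to a solution for \<open>r'\<close>: conditions (B) and (C) respect the grading, and \<open>F\<close> is
invariant under the antidiagonal reflection. So everything follows from uniqueness of solutions.

Uniqueness is proved by induction on \<open>j\<close> and, for fixed \<open>j\<close>, on the degree \<open>e\<close>. For two
solutions agreeing up to degree \<open>e\<close>, let \<open>u c\<close> and \<open>v c\<close> be the differences of the entries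
\<open>(c+e,c)\<close> of \<open>M j\<close> and \<open>(c+e+1,c)\<close> of \<open>N j\<close>, both of degree \<open>e+1\<close>. Condition (B) gives
\<open>u c + v c = 0\<close>. The differences \<open>p y = u y + v (y-1)\<close> of the entries \<open>(y+e,y)\<close> of \<open>N j * M j\<close>
therefore sum to zero, whereas commutation with \<open>F\<close> makes consecutive \<open>p y\<close> positive
rational multiples of each other. Over a \<open>\<complex>\<close>-algebra this forces \<open>p = 0\<close>, hence \<open>u = v = 0\<close>.
\<close>

lemma recursion_solution_M_superdiag:
  "is_recursion_solution r M N \<Longrightarrow> 1 \<le> a \<Longrightarrow> a \<le> j \<Longrightarrow> M j a (a + 1) = 1"
  unfolding is_recursion_solution_def by blast

lemma recursion_solution_M_upper:
  "is_recursion_solution r M N \<Longrightarrow> 1 \<le> a \<Longrightarrow> a \<le> j \<Longrightarrow> a + 1 < b \<Longrightarrow> b \<le> j + 1 \<Longrightarrow> M j a b = 0"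
  unfolding is_recursion_solution_def by blast

lemma recursion_solution_N_diag:
  "is_recursion_solution r M N \<Longrightarrow> 1 \<le> a \<Longrightarrow> a \<le> j \<Longrightarrow> N j a a = 1"
  unfolding is_recursion_solution_def by blast

lemma recursion_solution_N_upper:
  "is_recursion_solution r M N \<Longrightarrow> 1 \<le> a \<Longrightarrow> a \<le> j + 1 \<Longrightarrow> a < b \<Longrightarrow> b \<le> j \<Longrightarrow> N j a b = 0"
  unfolding is_recursion_solution_def by blast

lemma recursion_solution_MN:
  "is_recursion_solution r M N \<Longrightarrow> 1 \<le> j \<Longrightarrow> 1 \<le> a \<Longrightarrow> a \<le> j \<Longrightarrow> 1 \<le> c \<Longrightarrow> c \<le> j \<Longrightarrow>
   mmul (j + 1) (M j) (N j) a c =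
   mmul (j - 1) (N (j - 1)) (M (j - 1)) a c + (if a = j \<and> c = 1 then r j else 0)"
  unfolding is_recursion_solution_def by blast

definition NM_minus_E ::
  "(nat \<Rightarrow> nat \<Rightarrow> nat \<Rightarrow> 'a::ring_1) \<Rightarrow> (nat \<Rightarrow> nat \<Rightarrow> nat \<Rightarrow> 'a) \<Rightarrow> nat \<Rightarrow> nat \<Rightarrow> nat \<Rightarrow> 'a"
  where "NM_minus_E M N j = (\<lambda>x y. mmul j (N j) (M j) x y - Emat (j + 1) x y)"

lemma recursion_solution_commute_F:
  "is_recursion_solution r M N \<Longrightarrow> 1 \<le> j \<Longrightarrow> 1 \<le> a \<Longrightarrow> a \<le> j + 1 \<Longrightarrow> 1 \<le> c \<Longrightarrow> c \<le> j + 1 \<Longrightarrow>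
   mmul (j + 1) (NM_minus_E M N j) (Fmat (j + 1)) a c =
   mmul (j + 1) (Fmat (j + 1)) (NM_minus_E M N j) a c"
  unfolding is_recursion_solution_def NM_minus_E_def Let_def by blast

lemma recursion_solutionI:
  assumes "\<And>j a. 1 \<le> a \<Longrightarrow> a \<le> j \<Longrightarrow> M j a (a + 1) = 1"
    and "\<And>j a b. 1 \<le> a \<Longrightarrow> a \<le> j \<Longrightarrow> a + 1 < b \<Longrightarrow> b \<le> j + 1 \<Longrightarrow> M j a b = 0"
    and "\<And>j a. 1 \<le> a \<Longrightarrow> a \<le> j \<Longrightarrow> N j a a = 1"
    and "\<And>j a b. 1 \<le> a \<Longrightarrow> a \<le> j + 1 \<Longrightarrow> a < b \<Longrightarrow> b \<le> j \<Longrightarrow> N j a b = 0"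
    and "\<And>j a c. 1 \<le> j \<Longrightarrow> 1 \<le> a \<Longrightarrow> a \<le> j \<Longrightarrow> 1 \<le> c \<Longrightarrow> c \<le> j \<Longrightarrow>
           mmul (j + 1) (M j) (N j) a c =
           mmul (j - 1) (N (j - 1)) (M (j - 1)) a c + (if a = j \<and> c = 1 then r j else 0)"
    and "\<And>j a c. 1 \<le> j \<Longrightarrow> 1 \<le> a \<Longrightarrow> a \<le> j + 1 \<Longrightarrow> 1 \<le> c \<Longrightarrow> c \<le> j + 1 \<Longrightarrow>
           mmul (j + 1) (NM_minus_E M N j) (Fmat (j + 1)) a c =
           mmul (j + 1) (Fmat (j + 1)) (NM_minus_E M N j) a c"
  shows "is_recursion_solution r M N"
  unfolding is_recursion_solution_def Let_def
  by (intro conjI allI impI; elim conjE;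
      rule assms(1-5) assms(6)[unfolded NM_minus_E_def]; assumption)

lemma recursion_solution_MN_degree:
  assumes "is_recursion_solution r M N" "1 \<le> a" "a \<le> j" "1 \<le> b" "b \<le> j + 1" "c \<le> j"
  shows "M j a b * N j b c = 0 \<or> (a + 1 - b) + (b - c) = a + 1 - c"
  using recursion_solution_N_upper[OF assms(1), of b j c] recursion_solution_M_upper[OF assms(1), of a j b]
    assms by fastforce

lemma recursion_solution_NM_degree:
  assumes "is_recursion_solution r M N" "1 \<le> a" "a \<le> j + 1" "1 \<le> b" "b \<le> j" "c \<le> j + 1"
  shows "N j a b * M j b c = 0 \<or> (a - b) + (b + 1 - c) = a + 1 - c"
  using recursion_solution_N_upper[OF assms(1), of a j b] recursion_solution_M_upper[OF assms(1), of b j c]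
    assms by fastforce

lemma mmul_Fmat_right:
  assumes "1 \<le> z" "z + 1 \<le> m"
  shows "mmul m P (Fmat m) x z = P x (z + 1) * of_nat (z * (m - z))"
proof -
  have "mmul m P (Fmat m) x z = (\<Sum>b=1..m. if b = z + 1 then P x (z + 1) * of_nat (z * (m - z)) else 0)"
    unfolding mmul_def Fmat_def by (rule sum.cong) auto
  then show ?thesis using assms by simp
qed

lemma mmul_Fmat_left:
  assumes "1 \<le> x" "x \<le> m"
  shows "mmul m (Fmat m) P (x + 1) z = of_nat (x * (m - x)) * P x z"
proof -
  have "mmul m (Fmat m) P (x + 1) z = (\<Sum>b=1..m. if b = x then of_nat (x * (m - x)) * P x z else 0)"
    unfolding mmul_def Fmat_def by (rule sum.cong) auto
  then show ?thesis using assms by simp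
qed

lemma recursion_solution_NM_recurrence:
  assumes sol: "is_recursion_solution r M N" and "1 \<le> z" "z \<le> x" "x \<le> j"
  shows "mmul j (N j) (M j) (x + 1) (z + 1) * of_nat (z * (j + 1 - z)) =
         of_nat (x * (j + 1 - x)) * mmul j (N j) (M j) x z"
proof -
  let ?P = "NM_minus_E M N j"
  have "?P (x + 1) (z + 1) * of_nat (z * (j + 1 - z)) = mmul (j + 1) ?P (Fmat (j + 1)) (x + 1) z"
    using mmul_Fmat_right[of z "j + 1" ?P "x + 1"] assms by simp
  also have "\<dots> = mmul (j + 1) (Fmat (j + 1)) ?P (x + 1) z"
    using recursion_solution_commute_F[OF sol] assms by simp
  also have "\<dots> = of_nat (x * (j + 1 - x)) * ?P x z"
    using mmul_Fmat_left[of x "j + 1" ?P z] assms by simp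
  finally show ?thesis
    \<comment> \<open>\<open>z \<le> x\<close> makes both entries of \<open>E\<close> vanish\<close>
    using assms by (simp add: NM_minus_E_def Emat_def)
qed

lemma sum_split_shifted:
  fixes u v :: "nat \<Rightarrow> 'a::ab_group_add"
  shows "(\<Sum>y=1..n+1. (if y \<le> n then u y else 0) + (if 2 \<le> y then v (y - 1) else 0)) =
         (\<Sum>y=1..n. u y + v y)"
proof -
  have "(\<Sum>y=1..n+1. (if y \<le> n then u y else 0)) = (\<Sum>y=1..n. u y)"
    by (simp add: sum.cl_ivl_Suc)
  moreover have "(\<Sum>y=1..n+1. (if 2 \<le> y then v (y - 1) else 0)) =
                 (\<Sum>y=Suc 1..Suc n. (if 2 \<le> y then v (y - 1) else 0))"
    by (simp add: sum.atLeast_Suc_atMost)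
  moreover have "\<dots> = (\<Sum>y=1..n. v y)"
    by (simp only: sum.shift_bounds_cl_Suc_ivl) simp
  ultimately show ?thesis
    by (simp add: sum.distrib)
qed

lemma zero_of_shifted_pair_sums:
  fixes u v :: "nat \<Rightarrow> 'a::ab_group_add"
  assumes pair: "\<And>c. 1 \<le> c \<Longrightarrow> c \<le> n \<Longrightarrow> u c + v c = 0"
    and shifted: "\<And>y. 1 \<le> y \<Longrightarrow> y \<le> n \<Longrightarrow> u y + (if 2 \<le> y then v (y - 1) else 0) = 0"
    and c: "1 \<le> c" "c \<le> n"
  shows "u c = 0"
  using c
proof (induction c rule: dec_induct)
  case base
  then show ?case using shifted[of 1] by simp
next
  case (step k)
  then have "v k = 0"
    using pair[of k] by simp
  then show ?case
    using shifted[of "Suc k"] step by simp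
qed

text \<open>The bounds \<open>a < b + e\<close> and \<open>a < b + e + 1\<close> say that the entry has degree at most \<open>e\<close>.\<close>
definition agree_upto_degree ::
  "(nat \<Rightarrow> nat \<Rightarrow> nat \<Rightarrow> 'a) \<Rightarrow> (nat \<Rightarrow> nat \<Rightarrow> nat \<Rightarrow> 'a) \<Rightarrow>
   (nat \<Rightarrow> nat \<Rightarrow> nat \<Rightarrow> 'a) \<Rightarrow> (nat \<Rightarrow> nat \<Rightarrow> nat \<Rightarrow> 'a) \<Rightarrow> nat \<Rightarrow> nat \<Rightarrow> bool"
  where "agree_upto_degree M N M' N' j e \<longleftrightarrow>
    (\<forall>a b. 1 \<le> a \<and> a \<le> j \<and> 1 \<le> b \<and> b \<le> j + 1 \<and> a < b + e \<longrightarrow> M j a b = M' j a b) \<and>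
    (\<forall>a b. 1 \<le> a \<and> a \<le> j + 1 \<and> 1 \<le> b \<and> b \<le> j \<and> a < b + e + 1 \<longrightarrow> N j a b = N' j a b)"

lemma agree_upto_degree_0:
  assumes sol: "is_recursion_solution r M N" and sol': "is_recursion_solution r' M' N'"
  shows "agree_upto_degree M N M' N' j 0"
  unfolding agree_upto_degree_def
proof (intro conjI allI impI; elim conjE)
  fix a b :: nat
  assume "1 \<le> a" "a \<le> j" "1 \<le> b" "b \<le> j + 1" "a < b + 0"
  then show "M j a b = M' j a b"
    using recursion_solution_M_superdiag[OF sol] recursion_solution_M_superdiag[OF sol']
      recursion_solution_M_upper[OF sol, of a j b] recursion_solution_M_upper[OF sol', of a j b]
    by (cases "b = a + 1") simp_all
next
  fix a b :: nat
  assume "1 \<le> a" "a \<le> j + 1" "1 \<le> b" "b \<le> j" "a < b + 0 + 1"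
  then show "N j a b = N' j a b"
    using recursion_solution_N_diag[OF sol] recursion_solution_N_diag[OF sol']
      recursion_solution_N_upper[OF sol, of a j b] recursion_solution_N_upper[OF sol', of a j b]
    by (cases "a = b") simp_all
qed

lemma agree_upto_degree_SucI:
  assumes agree: "agree_upto_degree M N M' N' j e"
    and diagonal: "\<And>c. 1 \<le> c \<Longrightarrow> c + e \<le> j \<Longrightarrow>
      M j (c + e) c = M' j (c + e) c \<and> N j (c + e + 1) c = N' j (c + e + 1) c"
  shows "agree_upto_degree M N M' N' j (Suc e)"
  unfolding agree_upto_degree_def
proof (intro conjI allI impI; elim conjE)
  fix a b :: nat
  assume "1 \<le> a" "a \<le> j" "1 \<le> b" "b \<le> j + 1" "a < b + Suc e"
  then show "M j a b = M' j a b"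
    using agree diagonal[of b] unfolding agree_upto_degree_def by (auto simp: less_Suc_eq)
next
  fix a b :: nat
  assume "1 \<le> a" "a \<le> j + 1" "1 \<le> b" "b \<le> j" "a < b + Suc e + 1"
  then show "N j a b = N' j a b"
    using agree diagonal[of b] unfolding agree_upto_degree_def by (auto simp: less_Suc_eq)
qed

lemma agree_upto_full_degree:
  assumes "agree_upto_degree M N M' N' j (j + 1)"
  shows "1 \<le> a \<Longrightarrow> a \<le> j \<Longrightarrow> 1 \<le> b \<Longrightarrow> b \<le> j + 1 \<Longrightarrow> M j a b = M' j a b"
    and "1 \<le> a \<Longrightarrow> a \<le> j + 1 \<Longrightarrow> 1 \<le> b \<Longrightarrow> b \<le> j \<Longrightarrow> N j a b = N' j a b"
  using assms unfolding agree_upto_degree_def by auto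

lemma agree_upto_full_degree_mmul_NM:
  assumes "agree_upto_degree M N M' N' j (j + 1)" "1 \<le> a" "a \<le> j + 1" "1 \<le> c" "c \<le> j + 1"
  shows "mmul j (N j) (M j) a c = mmul j (N' j) (M' j) a c"
  unfolding mmul_def using assms agree_upto_full_degree[OF assms(1)] by (intro sum.cong) auto

lemma MN_diagonal_difference:
  assumes sol: "is_recursion_solution r M N" and sol': "is_recursion_solution r' M' N'"
    and agree: "agree_upto_degree M N M' N' j e" and c: "1 \<le> c" "c + e \<le> j"
  shows "mmul (j + 1) (M j) (N j) (c + e) c - mmul (j + 1) (M' j) (N' j) (c + e) c =
         (M j (c + e) c - M' j (c + e) c) + (N j (c + e + 1) c - N' j (c + e + 1) c)"
proof -
  have "M j (c + e) b * N j b c - M' j (c + e) b * N' j b c =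
      (if b = c then M j (c + e) c - M' j (c + e) c else 0) +
      (if b = c + e + 1 then N j (c + e + 1) c - N' j (c + e + 1) c else 0)"
    if b: "1 \<le> b" "b \<le> j + 1" for b
  proof -
    consider "b < c" | "b = c" | "c < b \<and> b \<le> c + e" | "b = c + e + 1" | "c + e + 1 < b"
      by linarith
    then show ?thesis
    proof cases
      case 1
      then have "N j b c = 0" "N' j b c = 0"
        using b c recursion_solution_N_upper[OF sol] recursion_solution_N_upper[OF sol'] by auto
      then show ?thesis using 1 by simp
    next
      case 2
      then have "N j b c = 1" "N' j b c = 1"
        using c recursion_solution_N_diag[OF sol] recursion_solution_N_diag[OF sol'] by auto
      then show ?thesis using 2 by simp
    next
      case 3
      then have "M j (c + e) b = M' j (c + e) b" "N j b c = N' j b c"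
        using agree b c unfolding agree_upto_degree_def by auto
      then show ?thesis using 3 by simp
    next
      case 4
      then have "M j (c + e) b = 1" "M' j (c + e) b = 1"
        using c recursion_solution_M_superdiag[OF sol] recursion_solution_M_superdiag[OF sol'] by auto
      then show ?thesis using 4 by simp
    next
      case 5
      then have "M j (c + e) b = 0" "M' j (c + e) b = 0"
        using b c recursion_solution_M_upper[OF sol] recursion_solution_M_upper[OF sol'] by auto
      then show ?thesis using 5 by simp
    qed
  qed
  then have "mmul (j + 1) (M j) (N j) (c + e) c - mmul (j + 1) (M' j) (N' j) (c + e) c =
      (\<Sum>b=1..j+1. (if b = c then M j (c + e) c - M' j (c + e) c else 0) +
         (if b = c + e + 1 then N j (c + e + 1) c - N' j (c + e + 1) c else 0))"
    unfolding mmul_def sum_subtractf[symmetric] by (intro sum.cong) auto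
  also have "\<dots> = (M j (c + e) c - M' j (c + e) c) + (N j (c + e + 1) c - N' j (c + e + 1) c)"
    using c by (simp add: sum.distrib)
  finally show ?thesis .
qed

lemma NM_diagonal_difference:
  assumes sol: "is_recursion_solution r M N" and sol': "is_recursion_solution r' M' N'"
    and agree: "agree_upto_degree M N M' N' j e" and y: "1 \<le> y" "y + e \<le> j + 1"
  shows "mmul j (N j) (M j) (y + e) y - mmul j (N' j) (M' j) (y + e) y =
         (if y + e \<le> j then M j (y + e) y - M' j (y + e) y else 0) +
         (if 2 \<le> y then N j (y + e) (y - 1) - N' j (y + e) (y - 1) else 0)"
proof -
  have "N j (y + e) b * M j b y - N' j (y + e) b * M' j b y =
      (if b = y + e then M j (y + e) y - M' j (y + e) y else 0) +
      (if b = y - 1 then N j (y + e) (y - 1) - N' j (y + e) (y - 1) else 0)"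
    if b: "1 \<le> b" "b \<le> j" for b
  proof -
    consider "b + 1 < y" | "b + 1 = y" | "y \<le> b \<and> b < y + e" | "b = y + e" | "y + e < b"
      by linarith
    then show ?thesis
    proof cases
      case 1
      then have "M j b y = 0" "M' j b y = 0"
        using b y recursion_solution_M_upper[OF sol] recursion_solution_M_upper[OF sol'] by auto
      then show ?thesis using 1 by auto
    next
      case 2
      then have "M j b y = 1" "M' j b y = 1"
        using b recursion_solution_M_superdiag[OF sol] recursion_solution_M_superdiag[OF sol'] by auto
      then show ?thesis using 2 by auto
    next
      case 3
      then have "N j (y + e) b = N' j (y + e) b" "M j b y = M' j b y"
        using agree b y unfolding agree_upto_degree_def by auto
      then show ?thesis using 3 by auto
    next
      case 4
      then have "N j (y + e) b = 1" "N' j (y + e) b = 1"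
        using b recursion_solution_N_diag[OF sol] recursion_solution_N_diag[OF sol'] by auto
      then show ?thesis using 4 y by auto
    next
      case 5
      then have "N j (y + e) b = 0" "N' j (y + e) b = 0"
        using b y recursion_solution_N_upper[OF sol] recursion_solution_N_upper[OF sol'] by auto
      then show ?thesis using 5 by auto
    qed
  qed
  then have "mmul j (N j) (M j) (y + e) y - mmul j (N' j) (M' j) (y + e) y =
      (\<Sum>b=1..j. (if b = y + e then M j (y + e) y - M' j (y + e) y else 0) +
         (if b = y - 1 then N j (y + e) (y - 1) - N' j (y + e) (y - 1) else 0))"
    unfolding mmul_def sum_subtractf[symmetric] by (intro sum.cong) auto
  also have "\<dots> = (if y + e \<le> j then M j (y + e) y - M' j (y + e) y else 0) +
         (if 2 \<le> y then N j (y + e) (y - 1) - N' j (y + e) (y - 1) else 0)"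
    using y by (auto simp add: sum.distrib)
  finally show ?thesis .
qed

context
  fixes smul :: "complex \<Rightarrow> 'a::ring_1 \<Rightarrow> 'a"
  assumes alg: "complex_algebra smul"
begin

lemma smul_add_right: "smul c (x + y) = smul c x + smul c y"
  using alg unfolding complex_algebra_def by blast

lemma smul_add_left: "smul (c + d) x = smul c x + smul d x"
  using alg unfolding complex_algebra_def by blast

lemma smul_smul: "smul (c * d) x = smul c (smul d x)"
  using alg unfolding complex_algebra_def by blast

lemma smul_one: "smul 1 x = x"
  using alg unfolding complex_algebra_def by blast

lemma smul_mult_left: "smul c (x * y) = smul c x * y"
  using alg unfolding complex_algebra_def by blast

lemma smul_mult_right: "smul c (x * y) = x * smul c y"
  using alg unfolding complex_algebra_def by blast

lemma smul_zero_right: "smul c 0 = 0"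
  using smul_add_right[of c 0 0] by simp

lemma smul_zero_left: "smul 0 x = 0"
  using smul_add_left[of 0 0 x] by simp

lemma smul_diff_right: "smul c (x - y) = smul c x - smul c y"
  using smul_add_right[of c "x - y" y] by (simp add: algebra_simps)

lemma smul_of_nat: "smul (of_nat n) x = of_nat n * x"
  by (induction n) (simp_all add: smul_zero_left smul_add_left smul_one distrib_right)

lemma smul_sum_left: "smul (sum g A) x = (\<Sum>i\<in>A. smul (g i) x)"
  by (induction A rule: infinite_finite_induct) (simp_all add: smul_zero_left smul_add_left)

lemma smul_sum_right: "smul c (sum f A) = (\<Sum>i\<in>A. smul c (f i))"
  by (induction A rule: infinite_finite_induct) (simp_all add: smul_zero_right smul_add_right)

lemma mult_smul_smul: "smul c x * smul d y = smul (c * d) (x * y)"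
  by (simp only: mult.commute[of c d] flip: smul_smul smul_mult_left smul_mult_right)

lemma smul_eq_0_cancel:
  assumes "c \<noteq> 0" "smul c x = 0"
  shows "x = 0"
proof -
  have "x = smul (1 / c) (smul c x)"
    using assms(1) by (simp add: smul_one flip: smul_smul)
  then show ?thesis using assms(2) by (simp add: smul_zero_right)
qed

lemma zero_sum_positive_ratio_vanishes:
  fixes p :: "nat \<Rightarrow> 'a" and f h :: "nat \<Rightarrow> nat"
  assumes rec: "\<And>z. 1 \<le> z \<Longrightarrow> z \<le> n \<Longrightarrow> p (Suc z) * of_nat (f z) = of_nat (h z) * p z"
    and pos: "\<And>z. 1 \<le> z \<Longrightarrow> z \<le> n \<Longrightarrow> f z > 0 \<and> h z > 0"
    and sum0: "(\<Sum>y=1..n+1. p y) = 0"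
    and y: "1 \<le> y" "y \<le> n + 1"
  shows "p y = 0"
proof -
  define g :: "nat \<Rightarrow> real" where "g k = (\<Prod>z\<in>{1..<k}. real (h z) / real (f z))" for k
  have p_eq: "p k = smul (of_real (g k)) (p 1)" if "1 \<le> k" "k \<le> n + 1" for k
    using that
  proof (induction k rule: dec_induct)
    case base
    then show ?case by (simp add: g_def smul_one)
  next
    case (step z)
    then have fz: "f z > 0" and z: "z \<le> n" using pos by auto
    have "p (Suc z) = smul (1 / of_nat (f z)) (smul (of_nat (f z)) (p (Suc z)))"
      using fz by (simp add: smul_one flip: smul_smul)
    also have "\<dots> = smul (1 / of_nat (f z)) (smul (of_nat (h z)) (p z))"
      using rec[OF step(1) z] by (simp only: smul_of_nat mult_of_nat_commute)
    also have "\<dots> = smul (1 / of_nat (f z) * of_nat (h z) * of_real (g z)) (p 1)"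
      using step by (simp only: smul_smul mult.assoc)
    also have "1 / of_nat (f z) * of_nat (h z) * of_real (g z) = (of_real (g (Suc z)) :: complex)"
      using step by (simp add: g_def prod.atLeastLessThan_Suc)
    finally show ?case .
  qed
  have "(\<Sum>y=1..n+1. g y) > 0"
    using pos unfolding g_def by (intro sum_pos prod_pos) auto
  then have "complex_of_real (\<Sum>y=1..n+1. g y) \<noteq> 0"
    by (metis of_real_eq_0_iff less_irrefl)
  moreover have "(\<Sum>y=1..n+1. p y) = (\<Sum>y=1..n+1. smul (of_real (g y)) (p 1))"
    by (intro sum.cong refl p_eq) auto
  then have "smul (of_real (\<Sum>y=1..n+1. g y)) (p 1) = 0"
    using sum0 by (simp only: of_real_sum smul_sum_left)
  ultimately have "p 1 = 0"
    by (rule smul_eq_0_cancel)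
  then show ?thesis
    using p_eq[OF y] by (simp add: smul_zero_right)
qed

lemma agree_next_diagonal:
  fixes M N M' N' :: "nat \<Rightarrow> nat \<Rightarrow> nat \<Rightarrow> 'a"
  assumes sol: "is_recursion_solution r M N" and sol': "is_recursion_solution r M' N'"
    and j: "1 \<le> j"
    and prev: "\<And>a c. 1 \<le> a \<Longrightarrow> a \<le> j \<Longrightarrow> 1 \<le> c \<Longrightarrow> c \<le> j \<Longrightarrow>
      mmul (j - 1) (N (j - 1)) (M (j - 1)) a c = mmul (j - 1) (N' (j - 1)) (M' (j - 1)) a c"
    and agree: "agree_upto_degree M N M' N' j e"
    and c: "1 \<le> c" "c + e \<le> j"
  shows "M j (c + e) c = M' j (c + e) c \<and> N j (c + e + 1) c = N' j (c + e + 1) c"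
proof -
  define n where "n = j - e"
  have n: "c \<le> n" "n + e = j"
    using c by (auto simp: n_def)
  define u where "u k = M j (k + e) k - M' j (k + e) k" for k
  define v where "v k = N j (k + e + 1) k - N' j (k + e + 1) k" for k
  define p where "p y = mmul j (N j) (M j) (y + e) y - mmul j (N' j) (M' j) (y + e) y" for y
  have pair: "u k + v k = 0" if "1 \<le> k" "k \<le> n" for k
    using MN_diagonal_difference[OF sol sol' agree, of k] recursion_solution_MN[OF sol j, of "k + e" k]
      recursion_solution_MN[OF sol' j, of "k + e" k] prev[of "k + e" k] that n
    by (simp add: u_def v_def)
  have p_eq: "p y = (if y \<le> n then u y else 0) + (if 2 \<le> y then v (y - 1) else 0)"
    if "1 \<le> y" "y \<le> n + 1" for y
    using NM_diagonal_difference[OF sol sol' agree, of y] that n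
    by (simp add: p_def u_def v_def)
  have "(\<Sum>y=1..n+1. p y) =
      (\<Sum>y=1..n+1. (if y \<le> n then u y else 0) + (if 2 \<le> y then v (y - 1) else 0))"
    by (intro sum.cong refl p_eq) auto
  also have "\<dots> = (\<Sum>y=1..n. u y + v y)"
    by (rule sum_split_shifted)
  also have "\<dots> = 0"
    using pair by (intro sum.neutral) auto
  finally have sum0: "(\<Sum>y=1..n+1. p y) = 0" .
  have rec: "p (Suc z) * of_nat (z * (j + 1 - z)) = of_nat ((z + e) * (j + 1 - (z + e))) * p z"
    if "1 \<le> z" "z \<le> n" for z
    using recursion_solution_NM_recurrence[OF sol, of z "z + e" j]
      recursion_solution_NM_recurrence[OF sol', of z "z + e" j] that n
    by (simp add: p_def algebra_simps)
  have pos: "z * (j + 1 - z) > 0 \<and> (z + e) * (j + 1 - (z + e)) > 0" if "1 \<le> z" "z \<le> n" for z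
    using that n by simp
  have p0: "p y = 0" if "1 \<le> y" "y \<le> n + 1" for y
    by (rule zero_sum_positive_ratio_vanishes[OF rec pos sum0 that])
  have "u c = 0"
    using zero_of_shifted_pair_sums[OF pair _ c(1) n(1)] p0 p_eq by fastforce
  then show ?thesis
    using pair[of c] c n by (simp add: u_def v_def)
qed

lemma recursion_solution_unique:
  fixes M N M' N' :: "nat \<Rightarrow> nat \<Rightarrow> nat \<Rightarrow> 'a"
  assumes sol: "is_recursion_solution r M N" and sol': "is_recursion_solution r M' N'"
  shows "agree_upto_degree M N M' N' j (j + 1)"
proof (induction j rule: less_induct)
  case (less j)
  show ?case
  proof (cases "j = 0")
    case True
    then show ?thesis unfolding agree_upto_degree_def by auto
  next
    case False
    then have j: "1 \<le> j" by simp
    have prev: "mmul (j - 1) (N (j - 1)) (M (j - 1)) a c = mmul (j - 1) (N' (j - 1)) (M' (j - 1)) a c"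
      if "1 \<le> a" "a \<le> j" "1 \<le> c" "c \<le> j" for a c
      using agree_upto_full_degree_mmul_NM[OF less.IH[of "j - 1"]] that j by simp
    have "agree_upto_degree M N M' N' j e" for e
    proof (induction e)
      case 0
      show ?case by (rule agree_upto_degree_0[OF sol sol'])
    next
      case (Suc e)
      show ?case
        by (rule agree_upto_degree_SucI[OF Suc.IH agree_next_diagonal[OF sol sol' j prev Suc.IH]])
    qed
    then show ?thesis .
  qed
qed

lemma mmul_graded_smul:
  assumes "\<And>b. 1 \<le> b \<Longrightarrow> b \<le> k \<Longrightarrow> A' a b = smul (lam ^ x b) (A a b)"
    and "\<And>b. 1 \<le> b \<Longrightarrow> b \<le> k \<Longrightarrow> B' b c = smul (lam ^ y b) (B b c)"
    and "\<And>b. 1 \<le> b \<Longrightarrow> b \<le> k \<Longrightarrow> A a b * B b c = 0 \<or> x b + y b = z"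
  shows "mmul k A' B' a c = smul (lam ^ z) (mmul k A B a c)"
  unfolding mmul_def smul_sum_right
proof (rule sum.cong)
  fix b assume "b \<in> {1..k}"
  then have "1 \<le> b" "b \<le> k" by auto
  then have "A' a b * B' b c = smul (lam ^ x b * lam ^ y b) (A a b * B b c)"
    using assms(1,2) by (simp add: mult_smul_smul)
  also have "\<dots> = smul (lam ^ z) (A a b * B b c)"
    using assms(3)[OF \<open>1 \<le> b\<close> \<open>b \<le> k\<close>] by (auto simp: smul_zero_right power_add[symmetric])
  finally show "A' a b * B' b c = smul (lam ^ z) (A a b * B b c)" .
qed simp

lemma graded_recursion_solution:
  fixes M N :: "nat \<Rightarrow> nat \<Rightarrow> nat \<Rightarrow> 'a"
  assumes sol: "is_recursion_solution r M N" and r': "\<forall>j\<ge>1. r' j = smul (lam ^ j) (r j)"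
  shows "is_recursion_solution r'
    (\<lambda>j a b. smul (lam ^ (a + 1 - b)) (M j a b)) (\<lambda>j a b. smul (lam ^ (a - b)) (N j a b))"
    (is "is_recursion_solution r' ?M ?N")
proof (rule recursion_solutionI)
  fix j a c :: nat
  assume j: "1 \<le> j" and a: "1 \<le> a" "a \<le> j" and c: "1 \<le> c" "c \<le> j"
  have "mmul (j + 1) (?M j) (?N j) a c = smul (lam ^ (a + 1 - c)) (mmul (j + 1) (M j) (N j) a c)"
    using a c recursion_solution_MN_degree[OF sol, of a j _ c]
    by (intro mmul_graded_smul[where x = "\<lambda>b. a + 1 - b" and y = "\<lambda>b. b - c"]) auto
  moreover have "mmul (j - 1) (?N (j - 1)) (?M (j - 1)) a c =
      smul (lam ^ (a + 1 - c)) (mmul (j - 1) (N (j - 1)) (M (j - 1)) a c)"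
    using j a c recursion_solution_NM_degree[OF sol, of a "j - 1" _ c]
    by (intro mmul_graded_smul[where x = "\<lambda>b. a - b" and y = "\<lambda>b. b + 1 - c"]) auto
  moreover have "smul (lam ^ (a + 1 - c)) (if a = j \<and> c = 1 then r j else 0) =
      (if a = j \<and> c = 1 then r' j else 0)"
    using r' j by (auto simp: smul_zero_right)
  ultimately show "mmul (j + 1) (?M j) (?N j) a c =
      mmul (j - 1) (?N (j - 1)) (?M (j - 1)) a c + (if a = j \<and> c = 1 then r' j else 0)"
    using recursion_solution_MN[OF sol j a c] by (simp add: smul_add_right)
next
  fix j a c :: nat
  assume j: "1 \<le> j" and a: "1 \<le> a" "a \<le> j + 1" and c: "1 \<le> c" "c \<le> j + 1"
  have NME: "NM_minus_E ?M ?N j x y = smul (lam ^ (x + 1 - y)) (NM_minus_E M N j x y)"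
    if "1 \<le> x" "x \<le> j + 1" "y \<le> j + 1" for x y
  proof -
    have "mmul j (?N j) (?M j) x y = smul (lam ^ (x + 1 - y)) (mmul j (N j) (M j) x y)"
      using that recursion_solution_NM_degree[OF sol, of x j _ y]
      by (intro mmul_graded_smul[where x = "\<lambda>b. x - b" and y = "\<lambda>b. b + 1 - y"]) auto
    moreover have "Emat (j + 1) x y = smul (lam ^ (x + 1 - y)) (Emat (j + 1) x y)"
      by (auto simp: Emat_def smul_one smul_zero_right)
    ultimately show ?thesis
      unfolding NM_minus_E_def smul_diff_right by simp
  qed
  have "mmul (j + 1) (NM_minus_E ?M ?N j) (Fmat (j + 1)) a c =
      smul (lam ^ (a - c)) (mmul (j + 1) (NM_minus_E M N j) (Fmat (j + 1)) a c)"
    using a NME[of a] by (intro mmul_graded_smul[where x = "\<lambda>b. a + 1 - b" and y = "\<lambda>b. 0"])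
      (auto simp: smul_one Fmat_def)
  moreover have "mmul (j + 1) (Fmat (j + 1)) (NM_minus_E ?M ?N j) a c =
      smul (lam ^ (a - c)) (mmul (j + 1) (Fmat (j + 1)) (NM_minus_E M N j) a c)"
    using c NME[of _ c] by (intro mmul_graded_smul[where x = "\<lambda>b. 0" and y = "\<lambda>b. b + 1 - c"])
      (auto simp: smul_one Fmat_def)
  ultimately show "mmul (j + 1) (NM_minus_E ?M ?N j) (Fmat (j + 1)) a c =
      mmul (j + 1) (Fmat (j + 1)) (NM_minus_E ?M ?N j) a c"
    using recursion_solution_commute_F[OF sol j a c] by simp
qed (use sol in \<open>auto simp: smul_one smul_zero_right recursion_solution_M_superdiag[simplified]
  recursion_solution_M_upper recursion_solution_N_diag recursion_solution_N_upper\<close>)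

end

context
  fixes smul :: "complex \<Rightarrow> 'a::ring_1 \<Rightarrow> 'a" and st :: "'a \<Rightarrow> 'a"
  assumes anti: "anti_automorphism smul st"
begin

lemma anti_add: "st (x + y) = st x + st y"
  using anti unfolding anti_automorphism_def by blast

lemma anti_mult: "st (x * y) = st y * st x"
  using anti unfolding anti_automorphism_def by blast

lemma anti_one: "st 1 = 1"
  using anti unfolding anti_automorphism_def by blast

lemma anti_zero: "st 0 = 0"
  using anti_add[of 0 0] by simp

lemma anti_diff: "st (x - y) = st x - st y"
  using anti_add[of "x - y" y] by (simp add: algebra_simps)

lemma anti_sum: "st (sum f A) = (\<Sum>i\<in>A. st (f i))"
  by (induction A rule: infinite_finite_induct) (simp_all add: anti_zero anti_add)

lemma anti_of_nat: "st (of_nat n) = of_nat n"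
  by (induction n) (simp_all add: anti_zero anti_add anti_one)

lemma anti_Fmat: "st (Fmat m x y) = Fmat m x y"
  unfolding Fmat_def by (simp del: of_nat_mult add: anti_of_nat anti_zero)

text \<open>The reflected factors are multiplied in reverse order: \<open>k + 1 - b\<close> reverses the
  summation index.\<close>
lemma mmul_anti:
  assumes "\<And>b. 1 \<le> b \<Longrightarrow> b \<le> k \<Longrightarrow> A' a b = st (B (k + 1 - b) a')"
    and "\<And>b. 1 \<le> b \<Longrightarrow> b \<le> k \<Longrightarrow> B' b c = st (A c' (k + 1 - b))"
  shows "mmul k A' B' a c = st (mmul k A B c' a')"
proof -
  have "mmul k A' B' a c = (\<Sum>b=1..k. st (A c' (k + 1 - b) * B (k + 1 - b) a'))"
    unfolding mmul_def using assms by (intro sum.cong) (simp_all add: anti_mult)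
  also have "\<dots> = st (\<Sum>b=1..k. A c' (k + 1 - b) * B (k + 1 - b) a')"
    by (simp add: anti_sum)
  also have "(\<Sum>b=1..k. A c' (k + 1 - b) * B (k + 1 - b) a') = (\<Sum>b=1..k. A c' b * B b a')"
    using sum.atLeastAtMost_rev[of "\<lambda>b. A c' b * B b a'" 1 k] by simp
  finally show ?thesis unfolding mmul_def .
qed

lemma Fmat_reflect:
  "1 \<le> b \<Longrightarrow> b \<le> m \<Longrightarrow> 1 \<le> c \<Longrightarrow> c \<le> m \<Longrightarrow> Fmat m b c = (Fmat m (m + 1 - c) (m + 1 - b) :: 'a)"
  unfolding Fmat_def by (auto simp: mult.commute)

lemma reflected_recursion_solution:
  fixes M N :: "nat \<Rightarrow> nat \<Rightarrow> nat \<Rightarrow> 'a"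
  assumes sol: "is_recursion_solution r M N" and r': "\<forall>j\<ge>1. r' j = st (r j)"
  shows "is_recursion_solution r'
    (\<lambda>j a b. st (N j (j + 2 - b) (j + 1 - a))) (\<lambda>j a b. st (M j (j + 1 - b) (j + 2 - a)))"
    (is "is_recursion_solution r' ?M ?N")
proof (rule recursion_solutionI)
  fix j a :: nat assume a: "1 \<le> a" "a \<le> j"
  show "?M j a (a + 1) = 1"
    using recursion_solution_N_diag[OF sol, of "j + 1 - a" j] a by (simp add: anti_one)
  show "?N j a a = 1"
    using recursion_solution_M_superdiag[OF sol, of "j + 1 - a" j] a by (simp add: anti_one Suc_diff_le)
next
  fix j a b :: nat assume "1 \<le> a" "a \<le> j" "a + 1 < b" "b \<le> j + 1"
  then show "?M j a b = 0"
    using recursion_solution_N_upper[OF sol, of "j + 2 - b" j "j + 1 - a"] by (simp add: anti_zero)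
next
  fix j a b :: nat assume "1 \<le> a" "a \<le> j + 1" "a < b" "b \<le> j"
  then show "?N j a b = 0"
    using recursion_solution_M_upper[OF sol, of "j + 1 - b" j "j + 2 - a"] by (simp add: anti_zero)
next
  fix j a c :: nat
  assume j: "1 \<le> j" and a: "1 \<le> a" "a \<le> j" and c: "1 \<le> c" "c \<le> j"
  have "mmul (j + 1) (?M j) (?N j) a c = st (mmul (j + 1) (M j) (N j) (j + 1 - c) (j + 1 - a))"
    by (rule mmul_anti) auto
  moreover have "mmul (j - 1) (?N (j - 1)) (?M (j - 1)) a c =
      st (mmul (j - 1) (N (j - 1)) (M (j - 1)) (j + 1 - c) (j + 1 - a))"
    using j by (intro mmul_anti) auto
  moreover have "st (if j + 1 - c = j \<and> j + 1 - a = 1 then r j else 0) =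
      (if a = j \<and> c = 1 then r' j else 0)"
    using r' j a c by (auto simp: anti_zero)
  ultimately show "mmul (j + 1) (?M j) (?N j) a c =
      mmul (j - 1) (?N (j - 1)) (?M (j - 1)) a c + (if a = j \<and> c = 1 then r' j else 0)"
    using recursion_solution_MN[OF sol j, of "j + 1 - c" "j + 1 - a"] a c by (simp add: anti_add)
next
  fix j a c :: nat
  assume j: "1 \<le> j" and a: "1 \<le> a" "a \<le> j + 1" and c: "1 \<le> c" "c \<le> j + 1"
  have NME: "NM_minus_E ?M ?N j x y = st (NM_minus_E M N j (j + 2 - y) (j + 2 - x))"
    if "1 \<le> x" "x \<le> j + 1" "1 \<le> y" "y \<le> j + 1" for x y
  proof -
    have "mmul j (?N j) (?M j) x y = st (mmul j (N j) (M j) (j + 2 - y) (j + 2 - x))"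
      by (rule mmul_anti) auto
    moreover have "Emat (j + 1) x y = st (Emat (j + 1) (j + 2 - y) (j + 2 - x))"
      using that by (auto simp: Emat_def anti_one anti_zero)
    ultimately show ?thesis
      unfolding NM_minus_E_def anti_diff by simp
  qed
  have "mmul (j + 1) (NM_minus_E ?M ?N j) (Fmat (j + 1)) a c =
      st (mmul (j + 1) (Fmat (j + 1)) (NM_minus_E M N j) (j + 2 - c) (j + 2 - a))"
    using a c NME[of a] Fmat_reflect[of _ "j + 1" c] by (intro mmul_anti) (auto simp: anti_Fmat)
  moreover have "mmul (j + 1) (Fmat (j + 1)) (NM_minus_E ?M ?N j) a c =
      st (mmul (j + 1) (NM_minus_E M N j) (Fmat (j + 1)) (j + 2 - c) (j + 2 - a))"
    using a c NME[of _ c] Fmat_reflect[of a "j + 1"] by (intro mmul_anti) (auto simp: anti_Fmat)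
  ultimately show "mmul (j + 1) (NM_minus_E ?M ?N j) (Fmat (j + 1)) a c =
      mmul (j + 1) (Fmat (j + 1)) (NM_minus_E ?M ?N j) a c"
    using recursion_solution_commute_F[OF sol j, of "j + 2 - c" "j + 2 - a"] a c by simp
qed

end

theorem lemma4p7:
  fixes smul :: "complex \<Rightarrow> 'a::ring_1 \<Rightarrow> 'a"
    and r r' :: "nat \<Rightarrow> 'a"
    and M N M' N' :: "nat \<Rightarrow> nat \<Rightarrow> nat \<Rightarrow> 'a"
  assumes "complex_algebra smul"
    and "is_recursion_solution r M N"
    and "is_recursion_solution r' M' N'"
  shows "(\<forall>lam::complex. (\<forall>j\<ge>1. r' j = smul (lam ^ j) (r j)) \<longrightarrow>
            (\<forall>j a b. 1 \<le> b \<and> b \<le> a \<and> a \<le> j \<longrightarrow>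
               M' j a b = smul (lam ^ (a - b + 1)) (M j a b) \<and>
               N' j (a + 1) b = smul (lam ^ (a - b + 1)) (N j (a + 1) b))) \<and>
         (\<forall>st. anti_automorphism smul st \<and> (\<forall>j\<ge>1. r' j = st (r j)) \<longrightarrow>
            (\<forall>j a b. 1 \<le> b \<and> b \<le> a \<and> a \<le> j \<longrightarrow>
               M' j a b = st (N j (j - b + 1 + 1) (j - a + 1)) \<and>
               N' j (a + 1) b = st (M j (j - b + 1) (j - a + 1))))"
proof (rule conjI; intro allI impI)
  fix lam :: complex and j a b :: nat
  assume r': "\<forall>j\<ge>1. r' j = smul (lam ^ j) (r j)" and ab: "1 \<le> b \<and> b \<le> a \<and> a \<le> j"
  have "agree_upto_degree
      (\<lambda>j a b. smul (lam ^ (a + 1 - b)) (M j a b)) (\<lambda>j a b. smul (lam ^ (a - b)) (N j a b)) M' N' j (j + 1)"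
    by (rule recursion_solution_unique[OF assms(1) graded_recursion_solution[OF assms(1,2) r'] assms(3)])
  from agree_upto_full_degree[OF this, of a b] agree_upto_full_degree(2)[OF this, of "a + 1" b] ab
  show "M' j a b = smul (lam ^ (a - b + 1)) (M j a b) \<and>
      N' j (a + 1) b = smul (lam ^ (a - b + 1)) (N j (a + 1) b)"
    by (simp add: Suc_diff_le)
next
  fix st :: "'a \<Rightarrow> 'a" and j a b :: nat
  assume st: "anti_automorphism smul st \<and> (\<forall>j\<ge>1. r' j = st (r j))"
    and ab: "1 \<le> b \<and> b \<le> a \<and> a \<le> j"
  have "agree_upto_degree (\<lambda>j a b. st (N j (j + 2 - b) (j + 1 - a)))
      (\<lambda>j a b. st (M j (j + 1 - b) (j + 2 - a))) M' N' j (j + 1)"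
    using reflected_recursion_solution[OF conjunct1[OF st] assms(2) conjunct2[OF st]]
    by (rule recursion_solution_unique[OF assms(1) _ assms(3)])
  from agree_upto_full_degree[OF this, of a b] agree_upto_full_degree(2)[OF this, of "a + 1" b] ab
  show "M' j a b = st (N j (j - b + 1 + 1) (j - a + 1)) \<and>
      N' j (a + 1) b = st (M j (j - b + 1) (j - a + 1))"
    by (simp add: Suc_diff_le)
qed

end
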